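(* Let $\Pi=\{\pi^*_i\}_{i=1}^n$ be a set of policies where each $\pi^*_i$ is optimal with respect to weight vector $\mathbf{w}_i\in\mathcal{W}$, and suppose that the set $\Psi=\{\boldsymbol{\psi}^{\pi^*_i}\}_{i=1}^n$ of their expected successor features is an $\epsilon_1$-CCS. Let $\phi_{\max}=\max\|\boldsymbol{\phi}\|$ be the maximum norm of the reward feature vector. Then the GPI-expanded set $\Psi^{\text{GPI}}$ is an $\epsilon_2$-CCS, where $$\epsilon_2\le\min\Big\{\epsilon_1,\ \frac{2}{1-\gamma}\,\phi_{\max}\,\max_{\mathbf{w}\in\mathcal{W}}\min_i\|\mathbf{w}-\mathbf{w}_i\|\Big\}.$$
   Context: Consider MDPs $(\mathcal{S},\mathcal{A},p,r_{\mathbf{w}},\mu,\gamma)$ sharing $\mathcal{S},\mathcal{A}$, transition kernel $p$, initial state distribution $\mu$ and discount $\gamma\in[0,1)$, with rewards linear in fixed features $\boldsymbol{\phi}(s,a,s')\in\mathbb{R}^d$: $r_{\mathbf{w}}(s,a,s')=\boldsymbol{\phi}(s,a,s')\cdot\mathbf{w}$. The task set $\mathcal{W}$ is the probability simplex $\{\mathbf{w}\in\mathbb{R}^d:w_i\ge0,\sum_iw_i=1\}$. For a policy $\pi$, successor features are $\boldsymbol{\psi}^\pi(s,a)=\mathbb{E}_\pi[\sum_{i\ge0}\gamma^i\boldsymbol{\phi}(S_{t+i},A_{t+i},S_{t+i+1})\mid S_t=s,A_t=a]$, $q^\pi_{\mathbf{w}}(s,a)=\boldsymbol{\psi}^\pi(s,a)\cdot\mathbf{w}$,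 the expected successor feature vector is $\boldsymbol{\psi}^\pi=\mathbb{E}_{S_0\sim\mu}[\boldsymbol{\psi}^\pi(S_0,\pi(S_0))]$, and $v^\pi_{\mathbf{w}}=\boldsymbol{\psi}^\pi\cdot\mathbf{w}$; $v^*_{\mathbf{w}}=\max_\pi v^\pi_{\mathbf{w}}$ over all policies. The convex coverage set is $\mathrm{CCS}=\{\boldsymbol{\psi}^\pi\mid\exists\mathbf{w}\text{ s.t. }\forall\pi',\ v^\pi_{\mathbf{w}}\ge v^{\pi'}_{\mathbf{w}}\}$. A set $\Psi$ of expected successor feature vectors is an $\epsilon$-CCS if for all $\mathbf{w}\in\mathcal{W}$, $\max_{\boldsymbol{\psi}\in\mathrm{CCS}}\boldsymbol{\psi}\cdot\mathbf{w}-\max_{\boldsymbol{\psi}\in\Psi}\boldsymbol{\psi}\cdot\mathbf{w}\le\epsilon$ (equivalently $v^*_{\mathbf{w}}-\max_{\boldsymbol{\psi}\in\Psi}\boldsymbol{\psi}\cdot\mathbf{w}\le\epsilon$). For a policy set $\Pi$ and $\mathbf{w}\in\mathcal{W}$, the GPI policy is $\pi^{\text{GPI}}(s;\mathbf{w})\in\arg\max_{a\in\mathcal{A}}\max_{\pi\in\Pi}q^\pi_{\mathbf{w}}(s,a)$, and the GPI-expanded set is $\Psi^{\text{GPI}}=\{\boldsymbol{\psi}^\pi\mid\pi\in\{\pi^{\text{GPI}}(\cdot;\mathbf{w}):\mathbf{w}\in\mathcal{W}\}\}$. *)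

theory Defs
  imports "HOL-Analysis.Analysis"
begin

text \<open>Finite MDP with state type 's, action type 'act, feature dimension 'd.
  p s a s' is the transition probability, phi s a s' the reward feature vector,
  mu the initial state distribution, gamma the discount.\<close>

text \<open>Action taken at step i of a trajectory that starts with S_t = s, A_t = a
  and follows pol afterwards.\<close>
definition sf_act :: "('s \<Rightarrow> 'act) \<Rightarrow> 'act \<Rightarrow> nat \<Rightarrow> 's \<Rightarrow> 'act" where
  "sf_act pol a i x = (if i = 0 then a else pol x)"

text \<open>Distribution of S_{t+i} given S_t = s, A_t = a, following pol afterwards.\<close>
primrec state_dist :: "('s::finite \<Rightarrow> 'act \<Rightarrow> 's \<Rightarrow> real) \<Rightarrow> ('s \<Rightarrow> 'act) \<Rightarrow> 's \<Rightarrow> 'act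
    \<Rightarrow> nat \<Rightarrow> 's \<Rightarrow> real" where
  "state_dist p pol s a 0 = (\<lambda>x. if x = s then 1 else 0)"
| "state_dist p pol s a (Suc i) =
     (\<lambda>y. \<Sum>x\<in>UNIV. state_dist p pol s a i x * p x (sf_act pol a i x) y)"

text \<open>E[phi(S_{t+i}, A_{t+i}, S_{t+i+1}) | S_t = s, A_t = a], following pol.\<close>
definition exp_feature :: "('s::finite \<Rightarrow> 'act \<Rightarrow> 's \<Rightarrow> real) \<Rightarrow> ('s \<Rightarrow> 'act \<Rightarrow> 's \<Rightarrow> real^'d)
    \<Rightarrow> ('s \<Rightarrow> 'act) \<Rightarrow> 's \<Rightarrow> 'act \<Rightarrow> nat \<Rightarrow> real^'d" where
  "exp_feature p phi pol s a i =
     (\<Sum>x\<in>UNIV. state_dist p pol s a i x *\<^sub>R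
        (\<Sum>y\<in>UNIV. p x (sf_act pol a i x) y *\<^sub>R phi x (sf_act pol a i x) y))"

definition sf :: "('s::finite \<Rightarrow> 'act \<Rightarrow> 's \<Rightarrow> real) \<Rightarrow> ('s \<Rightarrow> 'act \<Rightarrow> 's \<Rightarrow> real^'d) \<Rightarrow> real
    \<Rightarrow> ('s \<Rightarrow> 'act) \<Rightarrow> 's \<Rightarrow> 'act \<Rightarrow> real^'d" where
  "sf p phi gamma pol s a = (\<Sum>i. (gamma ^ i) *\<^sub>R exp_feature p phi pol s a i)"

definition exp_sf :: "('s::finite \<Rightarrow> 'act \<Rightarrow> 's \<Rightarrow> real) \<Rightarrow> ('s \<Rightarrow> 'act \<Rightarrow> 's \<Rightarrow> real^'d) \<Rightarrow> real
    \<Rightarrow> ('s \<Rightarrow> real) \<Rightarrow> ('s \<Rightarrow> 'act) \<Rightarrow> real^'d" where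
  "exp_sf p phi gamma mu pol = (\<Sum>s\<in>UNIV. mu s *\<^sub>R sf p phi gamma pol s (pol s))"

definition qval :: "('s::finite \<Rightarrow> 'act \<Rightarrow> 's \<Rightarrow> real) \<Rightarrow> ('s \<Rightarrow> 'act \<Rightarrow> 's \<Rightarrow> real^'d) \<Rightarrow> real
    \<Rightarrow> ('s \<Rightarrow> 'act) \<Rightarrow> real^'d \<Rightarrow> 's \<Rightarrow> 'act \<Rightarrow> real" where
  "qval p phi gamma pol w s a = sf p phi gamma pol s a \<bullet> w"

definition val :: "('s::finite \<Rightarrow> 'act \<Rightarrow> 's \<Rightarrow> real) \<Rightarrow> ('s \<Rightarrow> 'act \<Rightarrow> 's \<Rightarrow> real^'d) \<Rightarrow> real
    \<Rightarrow> ('s \<Rightarrow> real) \<Rightarrow> ('s \<Rightarrow> 'act) \<Rightarrow> real^'d \<Rightarrow> real" where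
  "val p phi gamma mu pol w = exp_sf p phi gamma mu pol \<bullet> w"

definition task_set :: "(real^'d) set" where
  "task_set = {w. (\<forall>i. 0 \<le> w $ i) \<and> (\<Sum>i\<in>UNIV. w $ i) = 1}"

definition CCS :: "('s::finite \<Rightarrow> 'act::finite \<Rightarrow> 's \<Rightarrow> real) \<Rightarrow> ('s \<Rightarrow> 'act \<Rightarrow> 's \<Rightarrow> real^'d)
    \<Rightarrow> real \<Rightarrow> ('s \<Rightarrow> real) \<Rightarrow> (real^'d) set" where
  "CCS p phi gamma mu = {exp_sf p phi gamma mu pol | pol.
      \<exists>w. \<forall>pol'. val p phi gamma mu pol' w \<le> val p phi gamma mu pol w}"

definition eps_CCS :: "('s::finite \<Rightarrow> 'act::finite \<Rightarrow> 's \<Rightarrow> real) \<Rightarrow> ('s \<Rightarrow> 'act \<Rightarrow> 's \<Rightarrow> real^'d)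
    \<Rightarrow> real \<Rightarrow> ('s \<Rightarrow> real) \<Rightarrow> (real^'d) set \<Rightarrow> real \<Rightarrow> bool" where
  "eps_CCS p phi gamma mu Psi eps =
     (\<forall>w\<in>task_set. (SUP psi\<in>CCS p phi gamma mu. psi \<bullet> w) - (SUP psi\<in>Psi. psi \<bullet> w) \<le> eps)"

definition optimal_policy :: "('s::finite \<Rightarrow> 'act \<Rightarrow> 's \<Rightarrow> real) \<Rightarrow> ('s \<Rightarrow> 'act \<Rightarrow> 's \<Rightarrow> real^'d)
    \<Rightarrow> real \<Rightarrow> ('s \<Rightarrow> 'act) \<Rightarrow> real^'d \<Rightarrow> bool" where
  "optimal_policy p phi gamma pol w =
     (\<forall>pol' s. qval p phi gamma pol' w s (pol' s) \<le> qval p phi gamma pol w s (pol s))"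

definition is_GPI_policy :: "('s::finite \<Rightarrow> 'act \<Rightarrow> 's \<Rightarrow> real) \<Rightarrow> ('s \<Rightarrow> 'act \<Rightarrow> 's \<Rightarrow> real^'d)
    \<Rightarrow> real \<Rightarrow> ('s \<Rightarrow> 'act) set \<Rightarrow> real^'d \<Rightarrow> ('s \<Rightarrow> 'act) \<Rightarrow> bool" where
  "is_GPI_policy p phi gamma Pols w pig =
     (\<forall>s a. (MAX pol\<in>Pols. qval p phi gamma pol w s a) \<le> (MAX pol\<in>Pols. qval p phi gamma pol w s (pig s)))"

end

theory Submission
  imports Defs
begin

(*
  Successor features satisfy a Bellman equation. For a task w, the defect
  D = max\<^sub>i q\<^sub>w(\<pi>\<^sub>i) - q\<^sub>w(GPI) of the GPI policy therefore satisfies D \<le> \<gamma> P(GPI) D, so its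
  maximum over the states is nonpositive: the GPI policy dominates every \<pi>\<^sub>i, and the GPI-expanded
  set inherits the bound \<epsilon>\<^sub>1 from \<Psi>.
  For the second bound, every expected successor feature vector has norm at most
  \<phi>\<^sub>m\<^sub>a\<^sub>x / (1 - \<gamma>). If \<pi>\<^sub>j is optimal for w\<^sub>j, then \<psi>(\<pi>) \<bullet> w\<^sub>j \<le> \<psi>(\<pi>\<^sub>j) \<bullet> w\<^sub>j for every policy \<pi>, so
  (\<psi>(\<pi>) - \<psi>(\<pi>\<^sub>j)) \<bullet> w \<le> \<psi>(\<pi>) \<bullet> (w - w\<^sub>j) + \<psi>(\<pi>\<^sub>j) \<bullet> (w\<^sub>j - w) \<le> 2 \<phi>\<^sub>m\<^sub>a\<^sub>x / (1 - \<gamma>) \<parallel>w - w\<^sub>j\<parallel>;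
  it remains to choose the w\<^sub>j nearest to w.
*)

definition mean_feature ::
    "('s::finite \<Rightarrow> 'act \<Rightarrow> 's \<Rightarrow> real) \<Rightarrow> ('s \<Rightarrow> 'act \<Rightarrow> 's \<Rightarrow> 'v::real_vector) \<Rightarrow> 's \<Rightarrow> 'act \<Rightarrow> 'v"
  where
  "mean_feature p phi s a = (\<Sum>s'\<in>UNIV. p s a s' *\<^sub>R phi s a s')"

lemma exp_feature_eq_mean_feature:
  "exp_feature p phi pol s a i
     = (\<Sum>x\<in>UNIV. state_dist p pol s a i x *\<^sub>R mean_feature p phi x (sf_act pol a i x))"
  by (simp add: exp_feature_def mean_feature_def)

lemma exp_feature_0: "exp_feature p phi pol s a 0 = mean_feature p phi s a"
  by (simp add: exp_feature_eq_mean_feature sf_act_def if_distrib[of "\<lambda>c. c *\<^sub>R _"] cong: if_cong)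

lemma state_dist_on_policy:
  "sf_act pol (pol s) i x = pol x \<or> state_dist p pol s (pol s) i x = 0"
  by (cases i) (simp_all add: sf_act_def)

(* state_dist is defined by splitting off the last transition; this splits off the first one,
   after which the trajectory follows pol. *)
lemma state_dist_Suc_first_step:
  "state_dist p pol s a (Suc i) y = (\<Sum>s'\<in>UNIV. p s a s' * state_dist p pol s' (pol s') i y)"
proof (induction i arbitrary: y)
  case 0
  show ?case
    by (simp add: sf_act_def if_distrib[of "\<lambda>c. c * _"] if_distrib[of "\<lambda>c. _ * c"] cong: if_cong)
next
  case (Suc i)
  have on_policy: "state_dist p pol s' (pol s') i x * p x (sf_act pol (pol s') i x) y
      = state_dist p pol s' (pol s') i x * p x (pol x) y" for s' x
    using state_dist_on_policy[of pol s' i x p] by auto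
  have "state_dist p pol s a (Suc (Suc i)) y
      = (\<Sum>x\<in>UNIV. \<Sum>s'\<in>UNIV. p s a s' * (state_dist p pol s' (pol s') i x * p x (pol x) y))"
    by (simp only: state_dist.simps(2)[of p pol s a "Suc i"] Suc.IH sf_act_def nat.distinct if_False
        sum_distrib_right mult.assoc)
  also have "\<dots> = (\<Sum>s'\<in>UNIV. p s a s' * state_dist p pol s' (pol s') (Suc i) y)"
    by (subst sum.swap) (simp add: sum_distrib_left on_policy)
  finally show ?case .
qed

lemma exp_feature_Suc:
  "exp_feature p phi pol s a (Suc i) = (\<Sum>s'\<in>UNIV. p s a s' *\<^sub>R exp_feature p phi pol s' (pol s') i)"
proof -
  let ?G = "mean_feature p phi"
  have on_policy: "state_dist p pol s' (pol s') i x *\<^sub>R ?G x (sf_act pol (pol s') i x)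
      = state_dist p pol s' (pol s') i x *\<^sub>R ?G x (pol x)" for s' x
    using state_dist_on_policy[of pol s' i x p] by auto
  have "exp_feature p phi pol s a (Suc i)
      = (\<Sum>x\<in>UNIV. \<Sum>s'\<in>UNIV. p s a s' *\<^sub>R (state_dist p pol s' (pol s') i x *\<^sub>R ?G x (pol x)))"
    by (simp only: exp_feature_eq_mean_feature state_dist_Suc_first_step sf_act_def nat.distinct if_False
        scaleR_sum_left scaleR_scaleR)
  also have "\<dots> = (\<Sum>s'\<in>UNIV. p s a s' *\<^sub>R exp_feature p phi pol s' (pol s') i)"
    by (subst sum.swap) (simp add: exp_feature_eq_mean_feature scaleR_sum_right on_policy)
  finally show ?thesis .
qed

lemma norm_convex_combination_le:
  fixes f :: "'s::finite \<Rightarrow> 'v::real_normed_vector"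
  assumes "\<forall>x. 0 \<le> q x" "(\<Sum>x\<in>UNIV. q x) = 1" "\<forall>x. norm (f x) \<le> B"
  shows "norm (\<Sum>x\<in>UNIV. q x *\<^sub>R f x) \<le> B"
proof -
  have "norm (\<Sum>x\<in>UNIV. q x *\<^sub>R f x) \<le> (\<Sum>x\<in>UNIV. q x * B)"
    using assms(1,3) by (intro norm_sum[THEN order_trans] sum_mono) (simp add: mult_left_mono)
  also have "\<dots> = B" using assms(2) by (simp add: sum_distrib_right[symmetric])
  finally show ?thesis .
qed

locale finite_mdp =
  fixes p :: "'s::finite \<Rightarrow> 'act \<Rightarrow> 's \<Rightarrow> real"
  assumes p_nonneg: "0 \<le> p s a s'"
    and sum_p_eq_1: "(\<Sum>s'\<in>UNIV. p s a s') = 1"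
begin

lemma state_dist_nonneg: "0 \<le> state_dist p pol s a i x"
  by (induction i arbitrary: x) (auto intro!: sum_nonneg mult_nonneg_nonneg p_nonneg)

lemma sum_state_dist: "(\<Sum>x\<in>UNIV. state_dist p pol s a i x) = 1"
proof (induction i)
  case (Suc i)
  have "(\<Sum>y\<in>UNIV. state_dist p pol s a (Suc i) y)
      = (\<Sum>x\<in>UNIV. state_dist p pol s a i x * (\<Sum>y\<in>UNIV. p x (sf_act pol a i x) y))"
    unfolding state_dist.simps sum_distrib_left by (rule sum.swap)
  then show ?case by (simp add: sum_p_eq_1 Suc.IH)
qed simp

lemma sum_p_mult_le: "(\<forall>s'. f s' \<le> M) \<Longrightarrow> (\<Sum>s'\<in>UNIV. p s a s' * f s') \<le> M"
  using sum_mono[of UNIV "\<lambda>s'. p s a s' * f s'" "\<lambda>s'. p s a s' * M"]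
  by (simp add: p_nonneg mult_left_mono sum_p_eq_1 flip: sum_distrib_right)

end

locale discounted_mdp = finite_mdp p for p :: "'s::finite \<Rightarrow> 'act \<Rightarrow> 's \<Rightarrow> real" +
  fixes phi :: "'s \<Rightarrow> 'act \<Rightarrow> 's \<Rightarrow> real^'d" and gamma B :: real
  assumes norm_phi_le: "norm (phi s a s') \<le> B"
    and gamma_nonneg: "0 \<le> gamma" and gamma_less_1: "gamma < 1"
begin

lemma B_nonneg: "0 \<le> B"
  using norm_ge_zero norm_phi_le order_trans by blast

lemma norm_mean_feature_le: "norm (mean_feature p phi s a) \<le> B"
  unfolding mean_feature_def by (rule norm_convex_combination_le) (simp_all add: p_nonneg sum_p_eq_1 norm_phi_le)

lemma norm_exp_feature_le: "norm (exp_feature p phi pol s a i) \<le> B"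
  unfolding exp_feature_eq_mean_feature
  by (rule norm_convex_combination_le) (simp_all add: state_dist_nonneg sum_state_dist norm_mean_feature_le)

lemma
  shows sf_sums: "(\<lambda>i. gamma ^ i *\<^sub>R exp_feature p phi pol s a i) sums sf p phi gamma pol s a"
    and norm_sf_le: "norm (sf p phi gamma pol s a) \<le> B / (1 - gamma)"
proof -
  have norm_le: "norm (gamma ^ i *\<^sub>R exp_feature p phi pol s a i) \<le> B * gamma ^ i" for i
    using mult_left_mono[OF norm_exp_feature_le, of "gamma ^ i"] gamma_nonneg by (simp add: mult.commute)
  have geometric: "(\<lambda>i. B * gamma ^ i) sums (B / (1 - gamma))"
    using sums_mult[OF geometric_sums, of gamma B] gamma_nonneg gamma_less_1 by simp
  have summable_norm_terms: "summable (\<lambda>i. norm (gamma ^ i *\<^sub>R exp_feature p phi pol s a i))"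
    by (rule summable_comparison_test[OF _ sums_summable[OF geometric]]) (use norm_le in auto)
  then show "(\<lambda>i. gamma ^ i *\<^sub>R exp_feature p phi pol s a i) sums sf p phi gamma pol s a"
    unfolding sf_def by (rule summable_sums[OF summable_norm_cancel])
  have "norm (sf p phi gamma pol s a) \<le> (\<Sum>i. norm (gamma ^ i *\<^sub>R exp_feature p phi pol s a i))"
    unfolding sf_def by (rule summable_norm[OF summable_norm_terms])
  also have "\<dots> \<le> B / (1 - gamma)"
    using suminf_le[OF norm_le summable_norm_terms sums_summable[OF geometric]] geometric
    by (simp add: sums_iff)
  finally show "norm (sf p phi gamma pol s a) \<le> B / (1 - gamma)" .
qed

lemma sf_Bellman:
  "sf p phi gamma pol s a
     = mean_feature p phi s a + gamma *\<^sub>R (\<Sum>s'\<in>UNIV. p s a s' *\<^sub>R sf p phi gamma pol s' (pol s'))"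
proof -
  let ?f = "\<lambda>s a i. gamma ^ i *\<^sub>R exp_feature p phi pol s a i"
  have "(\<lambda>i. \<Sum>s'\<in>UNIV. (gamma * p s a s') *\<^sub>R ?f s' (pol s') i)
      sums (\<Sum>s'\<in>UNIV. (gamma * p s a s') *\<^sub>R sf p phi gamma pol s' (pol s'))"
    by (intro sums_sum sums_scaleR_right sf_sums)
  then have "(\<lambda>i. ?f s a (Suc i)) sums (gamma *\<^sub>R (\<Sum>s'\<in>UNIV. p s a s' *\<^sub>R sf p phi gamma pol s' (pol s')))"
    by (simp add: exp_feature_Suc scaleR_sum_right mult_ac)
  then have "?f s a sums (gamma *\<^sub>R (\<Sum>s'\<in>UNIV. p s a s' *\<^sub>R sf p phi gamma pol s' (pol s')) + ?f s a 0)"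
    by (rule sums_Suc_iff[THEN iffD1])
  with sf_sums have "sf p phi gamma pol s a
      = gamma *\<^sub>R (\<Sum>s'\<in>UNIV. p s a s' *\<^sub>R sf p phi gamma pol s' (pol s')) + ?f s a 0"
    by (rule sums_unique2)
  then show ?thesis by (simp add: exp_feature_0)
qed

lemma qval_Bellman:
  "qval p phi gamma pol w s a
     = mean_feature p phi s a \<bullet> w + gamma * (\<Sum>s'\<in>UNIV. p s a s' * qval p phi gamma pol w s' (pol s'))"
  unfolding qval_def by (subst sf_Bellman) (simp add: inner_add_left inner_sum_left)

lemma Max_qval_le_GPI_backup:
  assumes "finite Pols" "Pols \<noteq> {}" and GPI: "is_GPI_policy p phi gamma Pols w pig"
  shows "(MAX pol\<in>Pols. qval p phi gamma pol w s a)
    \<le> mean_feature p phi s a \<bullet> w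
       + gamma * (\<Sum>s'\<in>UNIV. p s a s' * (MAX pol\<in>Pols. qval p phi gamma pol w s' (pig s')))"
    (is "_ \<le> ?backup")
proof (rule Max.boundedI)
  fix q assume "q \<in> (\<lambda>pol. qval p phi gamma pol w s a) ` Pols"
  then obtain pol where pol: "pol \<in> Pols" and q: "q = qval p phi gamma pol w s a" by blast
  have "qval p phi gamma pol w s' (pol s') \<le> (MAX pol'\<in>Pols. qval p phi gamma pol' w s' (pig s'))" for s'
    using Max_ge[OF finite_imageI[OF \<open>finite Pols\<close>] imageI[OF pol]] GPI
    unfolding is_GPI_policy_def by (meson order_trans)
  then have "(\<Sum>s'\<in>UNIV. p s a s' * qval p phi gamma pol w s' (pol s'))
      \<le> (\<Sum>s'\<in>UNIV. p s a s' * (MAX pol'\<in>Pols. qval p phi gamma pol' w s' (pig s')))"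
    by (intro sum_mono mult_left_mono) (simp_all add: p_nonneg)
  then show "q \<le> ?backup"
    unfolding q using gamma_nonneg by (subst qval_Bellman) (simp add: mult_left_mono)
qed (use assms in auto)

theorem qval_GPI_ge:
  assumes "finite Pols" "Pols \<noteq> {}" and GPI: "is_GPI_policy p phi gamma Pols w pig"
  shows "(MAX pol\<in>Pols. qval p phi gamma pol w s a) \<le> qval p phi gamma pig w s a"
proof -
  define D where "D s a = (MAX pol\<in>Pols. qval p phi gamma pol w s a) - qval p phi gamma pig w s a" for s a
  have D_le: "D s a \<le> gamma * (\<Sum>s'\<in>UNIV. p s a s' * D s' (pig s'))" for s a
    using Max_qval_le_GPI_backup[OF assms, of s a] qval_Bellman[of pig w s a]
    by (simp add: D_def right_diff_distrib sum_subtractf)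
  define M where "M = (MAX s. D s (pig s))"
  have "D s (pig s) \<le> M" for s
    unfolding M_def by (rule Max_ge) auto
  then have D_le_M: "D s a \<le> gamma * M" for s a
    using D_le[of s a] sum_p_mult_le[of "\<lambda>s'. D s' (pig s')" M s a] gamma_nonneg
    by (meson mult_left_mono order_trans)
  have "M \<in> range (\<lambda>s. D s (pig s))"
    unfolding M_def by (rule Max_in) auto
  then obtain s0 where "M = D s0 (pig s0)" by blast
  then have "M \<le> 0"
    using D_le_M[of s0 "pig s0"] gamma_less_1 by (simp add: mult_le_cancel_right1)
  then have "D s a \<le> 0"
    using D_le_M[of s a] gamma_nonneg by (meson mult_nonneg_nonpos order_trans)
  then show ?thesis by (simp add: D_def)
qed

end

lemma val_eq_sum_qval:
  "val p phi gamma mu pol w = (\<Sum>s\<in>UNIV. mu s * qval p phi gamma pol w s (pol s))"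
  by (simp add: val_def exp_sf_def qval_def inner_sum_left)

lemma val_le_if_optimal_policy:
  assumes "\<forall>s. 0 \<le> mu s" "optimal_policy p phi gamma pol w"
  shows "val p phi gamma mu pol' w \<le> val p phi gamma mu pol w"
  using assms unfolding val_eq_sum_qval optimal_policy_def by (intro sum_mono mult_left_mono) auto

lemma inner_gap_le_if_inner_le:
  fixes a b u v :: "'a::real_inner"
  assumes "a \<bullet> v \<le> b \<bullet> v" "norm a \<le> K" "norm b \<le> K"
  shows "a \<bullet> u - b \<bullet> u \<le> 2 * K * norm (u - v)"
proof -
  have "a \<bullet> (u - v) \<le> K * norm (u - v)"
    using norm_cauchy_schwarz[of a "u - v"] mult_right_mono[OF assms(2) norm_ge_zero[of "u - v"]]
    by linarith
  moreover have "b \<bullet> (v - u) \<le> K * norm (u - v)"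
    using norm_cauchy_schwarz[of b "v - u"] mult_right_mono[OF assms(3) norm_ge_zero[of "v - u"]]
    by (simp add: norm_minus_commute)
  ultimately show ?thesis
    using assms(1) by (simp add: inner_diff_right)
qed

context discounted_mdp
begin

lemma val_le_val_GPI:
  assumes "\<forall>s. 0 \<le> mu s" "finite Pols" "pol \<in> Pols" and GPI: "is_GPI_policy p phi gamma Pols w pig"
  shows "val p phi gamma mu pol w \<le> val p phi gamma mu pig w"
proof -
  have "qval p phi gamma pol w s (pol s) \<le> qval p phi gamma pig w s (pig s)" for s
  proof -
    have "qval p phi gamma pol w s (pol s) \<le> (MAX pol'\<in>Pols. qval p phi gamma pol' w s (pol s))"
      using assms(2,3) by (intro Max_ge) auto
    also have "\<dots> \<le> (MAX pol'\<in>Pols. qval p phi gamma pol' w s (pig s))"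
      using GPI unfolding is_GPI_policy_def by blast
    also have "\<dots> \<le> qval p phi gamma pig w s (pig s)"
      using assms(2,3) GPI by (intro qval_GPI_ge) auto
    finally show ?thesis .
  qed
  then show ?thesis
    unfolding val_eq_sum_qval using assms(1) by (intro sum_mono mult_left_mono) auto
qed

lemma norm_exp_sf_le:
  assumes "\<forall>s. 0 \<le> mu s" "(\<Sum>s\<in>UNIV. mu s) = 1"
  shows "norm (exp_sf p phi gamma mu pol) \<le> B / (1 - gamma)"
  unfolding exp_sf_def by (rule norm_convex_combination_le) (use assms norm_sf_le in auto)

lemma optimal_policy_suboptimality_le:
  assumes "\<forall>s. 0 \<le> mu s" "(\<Sum>s\<in>UNIV. mu s) = 1" "optimal_policy p phi gamma pol' w'"
  shows "val p phi gamma mu pol w - val p phi gamma mu pol' w \<le> 2 * (B / (1 - gamma)) * norm (w - w')"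
  using inner_gap_le_if_inner_le[OF _ norm_exp_sf_le norm_exp_sf_le]
    val_le_if_optimal_policy[OF assms(1,3)] assms(1,2)
  unfolding val_def by blast

end

lemma norm_le_1_if_task_set:
  assumes "w \<in> task_set"
  shows "norm w \<le> 1"
proof -
  have "norm w \<le> (\<Sum>i\<in>UNIV. \<bar>w $ i\<bar>)" by (rule norm_le_l1_cart)
  also have "\<dots> = 1" using assms by (simp add: task_set_def)
  finally show ?thesis .
qed

lemma ex_task_within_covering_radius:
  fixes ws :: "nat \<Rightarrow> real^'d"
  assumes "0 < n" "w \<in> task_set"
  obtains j where "j < n" "norm (w - ws j) \<le> (SUP v\<in>task_set. MIN i\<in>{..<n}. norm (v - ws i))"
proof -
  have "(MIN i\<in>{..<n}. norm (v - ws i)) \<le> 1 + norm (ws 0)" if "v \<in> task_set" for v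
  proof -
    have "(MIN i\<in>{..<n}. norm (v - ws i)) \<le> norm (v - ws 0)"
      using assms(1) by (intro Min_le) auto
    also have "\<dots> \<le> 1 + norm (ws 0)"
      using norm_triangle_ineq4[of v "ws 0"] norm_le_1_if_task_set[OF that] by linarith
    finally show ?thesis .
  qed
  then have "(MIN i\<in>{..<n}. norm (w - ws i)) \<le> (SUP v\<in>task_set. MIN i\<in>{..<n}. norm (v - ws i))"
    by (intro cSUP_upper[OF assms(2)] bdd_aboveI2) auto
  moreover have "(MIN i\<in>{..<n}. norm (w - ws i)) \<in> (\<lambda>i. norm (w - ws i)) ` {..<n}"
    using assms(1) by (intro Min_in) auto
  then obtain j where "j < n" "(MIN i\<in>{..<n}. norm (w - ws i)) = norm (w - ws j)"
    by auto
  ultimately show thesis using that by simp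
qed

lemma eps_CCS_if_val_le:
  fixes p :: "'s::finite \<Rightarrow> 'act::finite \<Rightarrow> 's \<Rightarrow> real" and Psi :: "(real^'d) set"
  assumes "\<And>w pol. w \<in> task_set \<Longrightarrow> val p phi gamma mu pol w \<le> (SUP psi\<in>Psi. psi \<bullet> w) + eps"
  shows "eps_CCS p phi gamma mu Psi eps"
  unfolding eps_CCS_def
proof (intro ballI)
  fix w :: "real^'d" assume "w \<in> task_set"
  \<comment> \<open>Some policy is optimal for w, so CCS is nonempty and its supremum is not a junk value.\<close>
  let ?v = "\<lambda>pol. val p phi gamma mu pol w"
  have "Max (range ?v) \<in> range ?v" by (rule Max_in) auto
  then obtain pol_opt where "?v pol_opt = Max (range ?v)" by (metis rangeE)
  moreover have "?v pol \<le> Max (range ?v)" for pol by (rule Max_ge) auto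
  ultimately have "\<forall>pol. ?v pol \<le> ?v pol_opt" by simp
  then have "CCS p phi gamma mu \<noteq> {}" by (auto simp: CCS_def)
  moreover have "psi \<bullet> w \<le> (SUP psi\<in>Psi. psi \<bullet> w) + eps" if "psi \<in> CCS p phi gamma mu" for psi
    using that assms[OF \<open>w \<in> task_set\<close>] by (auto simp: CCS_def val_def)
  ultimately have "(SUP psi\<in>CCS p phi gamma mu. psi \<bullet> w) \<le> (SUP psi\<in>Psi. psi \<bullet> w) + eps"
    by (rule cSUP_least)
  then show "(SUP psi\<in>CCS p phi gamma mu. psi \<bullet> w) - (SUP psi\<in>Psi. psi \<bullet> w) \<le> eps" by simp
qed

lemma eps_CCS_if_dominated:
  assumes "eps_CCS p phi gamma mu Psi eps" "Psi \<noteq> {}" "finite Psi'"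
    and "\<And>w psi. w \<in> task_set \<Longrightarrow> psi \<in> Psi \<Longrightarrow> \<exists>psi'\<in>Psi'. psi \<bullet> w \<le> psi' \<bullet> w"
  shows "eps_CCS p phi gamma mu Psi' eps"
proof -
  have "(SUP psi\<in>Psi. psi \<bullet> w) \<le> (SUP psi\<in>Psi'. psi \<bullet> w)" if "w \<in> task_set" for w
    using assms(2-4) that by (intro cSUP_mono bdd_above_finite) auto
  then show ?thesis using assms(1) unfolding eps_CCS_def by fastforce
qed

theorem theorem2:
  fixes p :: "'s::finite \<Rightarrow> 'act::finite \<Rightarrow> 's \<Rightarrow> real"
    and phi :: "'s \<Rightarrow> 'act \<Rightarrow> 's \<Rightarrow> real^'d"
    and mu :: "'s \<Rightarrow> real"
    and gamma :: real
    and n :: nat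
    and pis :: "nat \<Rightarrow> 's \<Rightarrow> 'act"
    and ws :: "nat \<Rightarrow> real^'d"
    and eps1 :: real
    and gpi :: "real^'d \<Rightarrow> 's \<Rightarrow> 'act"
  assumes "\<forall>s a s'. 0 \<le> p s a s'"
    and "\<forall>s a. (\<Sum>s'\<in>UNIV. p s a s') = 1"
    and "\<forall>s. 0 \<le> mu s"
    and "(\<Sum>s\<in>UNIV. mu s) = 1"
    and "0 \<le> gamma" and "gamma < 1"
    and "0 < n"
    and "\<forall>i<n. ws i \<in> task_set \<and> optimal_policy p phi gamma (pis i) (ws i)"
    and "eps_CCS p phi gamma mu (exp_sf p phi gamma mu ` pis ` {..<n}) eps1"
    and "\<forall>w\<in>task_set. is_GPI_policy p phi gamma (pis ` {..<n}) w (gpi w)"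
  shows "eps_CCS p phi gamma mu (exp_sf p phi gamma mu ` gpi ` task_set)
           (min eps1 (2 / (1 - gamma) * Max (range (\<lambda>(s, a, s'). norm (phi s a s')))
              * (SUP w\<in>task_set. MIN i\<in>{..<n}. norm (w - ws i))))"
proof -
  define phi_max where "phi_max = Max (range (\<lambda>(s, a, s'). norm (phi s a s')))"
  define radius where "radius = (SUP w\<in>task_set. MIN i\<in>{..<n}. norm (w - ws i))"
  let ?GPI = "exp_sf p phi gamma mu ` gpi ` task_set"
  have "norm (phi s a s') \<le> phi_max" for s a s'
    unfolding phi_max_def by (rule Max_ge) (auto intro: rev_image_eqI[of "(s, a, s')"])
  then interpret discounted_mdp p phi gamma phi_max
    using assms(1,2,5,6) by unfold_locales auto
  have GPI_dominates: "val p phi gamma mu (pis i) w \<le> val p phi gamma mu (gpi w) w"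
    if "i < n" "w \<in> task_set" for i w
    using that assms(3,10) by (intro val_le_val_GPI[of mu "pis ` {..<n}"]) auto
  have "eps_CCS p phi gamma mu ?GPI eps1"
    using assms(7) GPI_dominates unfolding val_def
    by (intro eps_CCS_if_dominated[OF assms(9)]) auto
  moreover have "eps_CCS p phi gamma mu ?GPI (2 / (1 - gamma) * phi_max * radius)"
  proof (rule eps_CCS_if_val_le)
    fix w :: "real^'d" and pol assume w: "w \<in> task_set"
    obtain j where j: "j < n" "norm (w - ws j) \<le> radius"
      using ex_task_within_covering_radius[OF assms(7) w] unfolding radius_def by blast
    have "val p phi gamma mu pol w
        \<le> val p phi gamma mu (pis j) w + 2 * (phi_max / (1 - gamma)) * norm (w - ws j)"
      using optimal_policy_suboptimality_le[OF assms(3,4), of "pis j" "ws j" pol w] assms(8) j(1)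
      by simp
    moreover have "val p phi gamma mu (pis j) w \<le> val p phi gamma mu (gpi w) w"
      using GPI_dominates[OF j(1) w] .
    moreover have "val p phi gamma mu (gpi w) w \<le> (SUP psi\<in>?GPI. psi \<bullet> w)"
      unfolding val_def using w by (intro cSUP_upper bdd_above_finite) auto
    moreover have "2 * (phi_max / (1 - gamma)) * norm (w - ws j) \<le> 2 / (1 - gamma) * phi_max * radius"
      using mult_left_mono[OF j(2), of "2 * (phi_max / (1 - gamma))"] B_nonneg gamma_less_1 by simp
    ultimately show "val p phi gamma mu pol w \<le> (SUP psi\<in>?GPI. psi \<bullet> w) + 2 / (1 - gamma) * phi_max * radius"
      by linarith
  qed
  ultimately show ?thesis unfolding eps_CCS_def radius_def phi_max_def by auto
qed

end
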